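(* Over all 3-periodics of $\mathcal{E}$, the triangle center $X_{100}^\dagger$ of the focus-inversive triangle moves on the circle with center and radius \[C_{100}^\dagger=\left(-c\left(1+\frac{\rho^2}{b^2}\right),0\right),\qquad R_{100}^\dagger=\rho^2\,\frac{a}{b^2}.\]
   Context: Let $a>b>0$ and let $\mathcal{E}$ be the ellipse $x^2/a^2+y^2/b^2=1$. Set $c=\sqrt{a^2-b^2}$, and let the foci be $f_1=(-c,0)$, $f_2=(c,0)$. A 3-periodic is a triangle $P_1P_2P_3$ with vertices on $\mathcal{E}$ such that at each vertex the normal to $\mathcal{E}$ bisects the angle formed by the two sides meeting at that vertex; these form a one-parameter family (one through every point of $\mathcal{E}$). Fix $\rho>0$; the focus-inversive triangle has vertices $P_i^\dagger=f_1+(\rho/d_{1,i})^2(P_i-f_1)$, $d_{1,i}=|P_i-f_1|$. $X_{100}$ is Kimberling's center $X_{100}$: the anticomplement of the Feuerbach point (the point of the circumcircle with barycentrics $a_s/(b_s-c_s):b_s/(c_s-a_s):c_s/(a_s-b_s)$, where $a_s,b_s,c_s$ are the side lengths). *)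

theory Defs
  imports Complex_Main
begin

text \<open>Points of the plane are represented as complex numbers x + i y.\<close>

definition on_ellipse :: "real \<Rightarrow> real \<Rightarrow> complex \<Rightarrow> bool" where
  "on_ellipse a b z \<longleftrightarrow> (Re z)^2 / a^2 + (Im z)^2 / b^2 = 1"

text \<open>Normal vector to the ellipse at z (gradient of the defining function, up to factor 2).\<close>
definition ellipse_normal :: "real \<Rightarrow> real \<Rightarrow> complex \<Rightarrow> complex" where
  "ellipse_normal a b z = Complex (Re z / a^2) (Im z / b^2)"

definition unit_dir :: "complex \<Rightarrow> complex \<Rightarrow> complex" where
  "unit_dir P Q = (Q - P) / of_real (cmod (Q - P))"

text \<open>At vertex P with neighbours A and B, the normal line to the ellipse at P is the
  bisector of angle APB: the internal bisector direction (sum of the unit vectors along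
  the two sides) is parallel to the normal.\<close>
definition normal_bisects :: "real \<Rightarrow> real \<Rightarrow> complex \<Rightarrow> complex \<Rightarrow> complex \<Rightarrow> bool" where
  "normal_bisects a b P A B \<longleftrightarrow>
     Im (cnj (unit_dir P A + unit_dir P B) * ellipse_normal a b P) = 0"

definition three_periodic :: "real \<Rightarrow> real \<Rightarrow> complex \<Rightarrow> complex \<Rightarrow> complex \<Rightarrow> bool" where
  "three_periodic a b P1 P2 P3 \<longleftrightarrow>
     P1 \<noteq> P2 \<and> P2 \<noteq> P3 \<and> P1 \<noteq> P3 \<and>
     on_ellipse a b P1 \<and> on_ellipse a b P2 \<and> on_ellipse a b P3 \<and>
     normal_bisects a b P1 P2 P3 \<and> normal_bisects a b P2 P3 P1 \<and>
     normal_bisects a b P3 P1 P2"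

definition inversion :: "complex \<Rightarrow> real \<Rightarrow> complex \<Rightarrow> complex" where
  "inversion f \<rho> P = f + of_real ((\<rho> / cmod (P - f))^2) * (P - f)"

definition from_barycentrics :: "complex \<Rightarrow> complex \<Rightarrow> complex \<Rightarrow> real \<Rightarrow> real \<Rightarrow> real \<Rightarrow> complex" where
  "from_barycentrics A B C w1 w2 w3 =
     (of_real w1 * A + of_real w2 * B + of_real w3 * C) / of_real (w1 + w2 + w3)"

text \<open>Kimberling's X(100): barycentrics a/(b-c) : b/(c-a) : c/(a-b), a,b,c the side lengths.\<close>
definition X100 :: "complex \<Rightarrow> complex \<Rightarrow> complex \<Rightarrow> complex" where
  "X100 A B C =
    (let sa = cmod (B - C); sb = cmod (C - A); sc = cmod (A - B)
     in from_barycentrics A B C (sa / (sb - sc)) (sb / (sc - sa)) (sc / (sa - sb)))"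

end

(*
  Seen from the focus f1 = -c, a point P of the ellipse is P + c = d z with |z| = 1 and
  d (a - c Re z) = b^2 (the focal polar equation), so the inversion about f1 sends it to
  C + R limacon (c/a) z, where C and R are the claimed centre and radius.

  The bisector condition at a vertex P with neighbours A, B says that
  D(P,A) / |A - P| = D(P,B) / |B - P|, where D(P,A) = |P - f1| |A - f1| - <P - f1, A - f1>
  is the angle defect. Hence D(P_i,P_j) = r |P_i - P_j| for a single r, and since
  D(P_i,P_j) = d_i d_j |z_i - z_j|^2 / 2 the inverted triangle has sides proportional to
  |z_i - z_j|^2. On the unit circle this proportionality is a polynomial relation between
  z_i and z_j; comparing the three relations shows that z_1 + z_2 + z_3 is real. Written in
  the z_i, the barycentrics of X100 are rational functions, and the reality of z_1 + z_2 + z_3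
  is exactly what makes their weighted mean equal to C + R z_1 z_2 z_3, at distance R from C.
*)
theory Submission
  imports Defs
begin

definition angle_defect :: "complex \<Rightarrow> complex \<Rightarrow> real" where
  "angle_defect u v = cmod u * cmod v - Re (cnj u * v)"

lemma angle_defect_commute: "angle_defect u v = angle_defect v u"
  unfolding angle_defect_def by (simp add: algebra_simps)

lemma angle_defect_sgn: "angle_defect u v = cmod u * cmod v * (cmod (sgn u - sgn v))^2 / 2"
proof (cases "u = 0 \<or> v = 0")
  case True
  then show ?thesis by (auto simp: angle_defect_def)
next
  case False
  have unit: "(Re (sgn w))^2 + (Im (sgn w))^2 = 1" if "w \<noteq> 0" for w
    using that norm_sgn[of w] by (simp add: cmod_def)
  define t where "t = Re (cnj (sgn u) * sgn v)"
  have "(cmod (sgn u - sgn v))^2 = 2 - 2 * t"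
    using unit[of u] unit[of v] False by (simp add: t_def cmod_power2 power2_diff algebra_simps)
  moreover have "Re (cnj u * v) = cmod u * cmod v * t"
    using False by (simp add: t_def sgn_eq)
  ultimately show ?thesis
    unfolding angle_defect_def by (simp only:) (simp add: algebra_simps)
qed

lemma cnj_unit: "cmod z = 1 \<Longrightarrow> cnj z = inverse z"
  by (metis complex_norm_square inverse_unique of_real_1 one_power2)

lemma norm_diff_unit_square:
  assumes "cmod z = 1" "cmod w = 1"
  shows "of_real ((cmod (z - w))^2) = - ((z - w)^2) / (z * w)"
proof -
  have "z \<noteq> 0" "w \<noteq> 0"
    using assms by auto
  then show ?thesis
    unfolding complex_norm_square using assms by (simp add: cnj_unit field_simps power2_eq_square)
qed

lemma ellipse_normal_chord:
  assumes "on_ellipse a b P" "on_ellipse a b A"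
  shows "Re (cnj (ellipse_normal a b P) * (A - P))
           = - ((Re A - Re P)^2 / a^2 + (Im A - Im P)^2 / b^2) / 2"
  using assms unfolding on_ellipse_def ellipse_normal_def
  by (simp add: power2_diff diff_divide_distrib add_divide_distrib power2_eq_square algebra_simps)

lemma bisector_equal_projections:
  fixes U V N :: complex
  assumes "cmod U = 1" "cmod V = 1" and parallel: "Im (cnj (U + V) * N) = 0"
    and "Re (cnj N * U) + Re (cnj N * V) \<noteq> 0"
  shows "Re (cnj N * U) = Re (cnj N * V)"
proof -
  have "(Re U)^2 + (Im U)^2 = (Re V)^2 + (Im V)^2"
    using assms(1,2) by (simp add: cmod_def)
  moreover have "(Re U + Re V) * Im N = (Im U + Im V) * Re N"
    using parallel by (simp add: algebra_simps)
  \<comment> \<open>\<open>U - V\<close> is orthogonal to \<open>U + V\<close>, which is parallel to \<open>N\<close> unless it vanishes\<close>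
  ultimately have "((Re U - Re V) * Re N + (Im U - Im V) * Im N)
      * ((Re U + Re V) * Re N + (Im U + Im V) * Im N) = 0"
    by algebra
  moreover have "(Re U + Re V) * Re N + (Im U + Im V) * Im N \<noteq> 0"
    using assms(4) by (simp add: algebra_simps)
  ultimately have "(Re U - Re V) * Re N + (Im U - Im V) * Im N = 0"
    by simp
  then show ?thesis
    by (simp add: algebra_simps)
qed

lemma norm_inversion_diff:
  assumes "P \<noteq> F" "Q \<noteq> F"
  shows "cmod (inversion F \<rho> P - inversion F \<rho> Q)
           = \<rho>^2 * cmod (P - Q) / (cmod (P - F) * cmod (Q - F))"
proof -
  define u v where "u = P - F" and "v = Q - F"
  have "u \<noteq> 0" "v \<noteq> 0"
    using assms by (auto simp: u_def v_def)
  have inverse_cnj: "w / of_real ((cmod w)^2) = inverse (cnj w)" if "w \<noteq> 0" for w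
    using that unfolding complex_norm_square by (simp add: field_simps)
  have "inversion F \<rho> P - inversion F \<rho> Q
      = of_real (\<rho>^2) * (u / of_real ((cmod u)^2) - v / of_real ((cmod v)^2))"
    unfolding inversion_def u_def[symmetric] v_def[symmetric]
    using \<open>u \<noteq> 0\<close> \<open>v \<noteq> 0\<close> by (simp add: power_divide field_simps)
  also have "\<dots> = of_real (\<rho>^2) * cnj ((v - u) / (u * v))"
    unfolding inverse_cnj[OF \<open>u \<noteq> 0\<close>] inverse_cnj[OF \<open>v \<noteq> 0\<close>]
    using \<open>u \<noteq> 0\<close> \<open>v \<noteq> 0\<close> by (simp add: field_simps)
  finally have diff:
    "inversion F \<rho> P - inversion F \<rho> Q = of_real (\<rho>^2) * cnj ((v - u) / (u * v))" .
  show ?thesis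
    unfolding diff norm_mult complex_mod_cnj norm_of_real
    by (simp add: norm_divide norm_mult u_def v_def norm_minus_commute)
qed

text \<open>For \<open>|z| = 1\<close> this traces a limacon of Pascal, the inverse of a conic in its focus.\<close>
definition limacon :: "real \<Rightarrow> complex \<Rightarrow> complex" where
  "limacon e z = of_real e + z - of_real e * (z^2 + 1) / 2"

locale ellipse_focus =
  fixes a b c :: real
  assumes a_pos: "0 < a" and b_pos: "0 < b" and c_nonneg: "0 \<le> c"
    and c_square: "c^2 = a^2 - b^2"
begin

lemma c_less_a: "c < a"
proof (rule power_less_imp_less_base)
  show "c^2 < a^2" using c_square b_pos by simp
qed (use a_pos in simp)

lemma focal_radius:
  assumes "on_ellipse a b P"
  shows "cmod (P + of_real c) = a + c / a * Re P" and "0 < a + c / a * Re P"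
proof -
  have ell: "(Re P)^2 / a^2 + (Im P)^2 / b^2 = 1"
    using assms by (simp add: on_ellipse_def)
  moreover have "0 \<le> (Im P)^2 / b^2" by simp
  ultimately have "(Re P)^2 / a^2 \<le> 1"
    by linarith
  then have "(Re P)^2 \<le> a^2"
    using a_pos by (simp add: divide_le_eq_1)
  then have "- a \<le> Re P"
    using a_pos abs_le_square_iff[of "Re P" a] by simp
  then have "c / a * (- a) \<le> c / a * Re P"
    using a_pos c_nonneg by (intro mult_left_mono) auto
  then show pos: "0 < a + c / a * Re P"
    using c_less_a a_pos by simp
  have "a^2 * (Im P)^2 = a^2 * b^2 - b^2 * (Re P)^2"
    using ell a_pos b_pos by (simp add: field_simps)
  then have "a^2 * ((Re P + c)^2 + (Im P)^2) = (a^2 + c * Re P)^2"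
    using c_square by algebra
  then have "(Re P + c)^2 + (Im P)^2 = (a + c / a * Re P)^2"
    using a_pos by (simp add: field_simps power2_eq_square)
  then show "cmod (P + of_real c) = a + c / a * Re P"
    using pos by (simp add: norm_complex_def)
qed

lemma focal_radius_pos: "on_ellipse a b P \<Longrightarrow> 0 < cmod (P + of_real c)"
  using focal_radius by simp

lemma norm_sgn_focal: "on_ellipse a b P \<Longrightarrow> cmod (sgn (P + of_real c)) = 1"
  using focal_radius_pos by (simp add: norm_sgn)

lemma focal_polar:
  assumes "on_ellipse a b P"
  shows "cmod (P + of_real c) * (a - c * Re (sgn (P + of_real c))) = b^2"
proof -
  define d z where "d = cmod (P + of_real c)" and "z = sgn (P + of_real c)"
  have dRe: "d * Re z = Re P + c"
    using focal_radius_pos[OF assms] by (simp add: d_def z_def)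
  have "d * (a - c * Re z) = a * d - c * (d * Re z)"
    by (simp add: algebra_simps)
  also have "\<dots> = a * (a + c / a * Re P) - c * (Re P + c)"
    by (simp only: dRe) (simp only: focal_radius(1)[OF assms, folded d_def])
  also have "\<dots> = a^2 - c^2"
    using a_pos by (simp add: field_simps power2_eq_square)
  finally show ?thesis
    by (simp add: d_def z_def c_square)
qed

lemma sgn_focal_eq_iff:
  assumes "on_ellipse a b P" "on_ellipse a b Q"
  shows "sgn (P + of_real c) = sgn (Q + of_real c) \<longleftrightarrow> P = Q"
proof
  assume same: "sgn (P + of_real c) = sgn (Q + of_real c)"
  have "cmod (P + of_real c) = cmod (Q + of_real c)"
    using focal_polar[OF assms(1)] focal_polar[OF assms(2)] b_pos unfolding same
    by (metis mult_cancel_right mult_zero_right zero_less_power less_irrefl)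
  then have "P + of_real c = Q + of_real c"
    using same by (metis sgn_eq divide_eq_0_iff norm_eq_zero of_real_eq_0_iff nonzero_eq_divide_eq)
  then show "P = Q"
    by simp
qed simp

lemma focal_angle_defect:
  assumes "on_ellipse a b P" "on_ellipse a b A"
  shows "angle_defect (P + of_real c) (A + of_real c)
           = b^2 * ((Re A - Re P)^2 / a^2 + (Im A - Im P)^2 / b^2) / 2"
proof -
  have "angle_defect (P + of_real c) (A + of_real c)
      = (a + c / a * Re P) * (a + c / a * Re A) - ((Re P + c) * (Re A + c) + Im P * Im A)"
    using assms by (simp add: angle_defect_def focal_radius)
  also have "\<dots> = (a^2 - c^2) - (1 - c^2 / a^2) * Re P * Re A - Im P * Im A"
    using a_pos by (simp add: field_simps power2_eq_square)
  also have "\<dots> = b^2 - b^2 * (Re P * Re A / a^2) - Im P * Im A"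
    using a_pos by (simp add: c_square diff_divide_distrib)
  also have "\<dots> = b^2 * (1 - (Re P * Re A / a^2 + Im P * Im A / b^2))"
    using b_pos by (simp add: algebra_simps)
  also have "(Re A - Re P)^2 / a^2 + (Im A - Im P)^2 / b^2
      = ((Re P)^2 / a^2 + (Im P)^2 / b^2) + ((Re A)^2 / a^2 + (Im A)^2 / b^2)
        - 2 * (Re P * Re A / a^2 + Im P * Im A / b^2)"
    by (simp add: power2_diff diff_divide_distrib add_divide_distrib algebra_simps)
  then have "1 - (Re P * Re A / a^2 + Im P * Im A / b^2)
      = ((Re A - Re P)^2 / a^2 + (Im A - Im P)^2 / b^2) / 2"
    using assms unfolding on_ellipse_def by (simp add: algebra_simps)
  finally show ?thesis by simp
qed

lemma focal_angle_defect_pos: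
  assumes "on_ellipse a b P" "on_ellipse a b A" "P \<noteq> A"
  shows "0 < angle_defect (P + of_real c) (A + of_real c)"
proof -
  have "Re A \<noteq> Re P \<or> Im A \<noteq> Im P"
    using assms(3) complex_eqI by blast
  then have "0 < (Re A - Re P)^2 / a^2 + (Im A - Im P)^2 / b^2"
    using a_pos b_pos by (auto intro: add_pos_nonneg add_nonneg_pos)
  then show ?thesis
    using focal_angle_defect[OF assms(1,2)] b_pos by (simp only:) simp
qed

lemma ellipse_normal_focal:
  assumes "on_ellipse a b P" "on_ellipse a b A"
  shows "Re (cnj (ellipse_normal a b P) * (A - P))
           = - angle_defect (P + of_real c) (A + of_real c) / b^2"
  using ellipse_normal_chord[OF assms] focal_angle_defect[OF assms] b_pos
  by (simp only:) (simp add: field_simps)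

lemma normal_bisects_focal_ratio:
  assumes P: "on_ellipse a b P" and A: "on_ellipse a b A" and B: "on_ellipse a b B"
    and "P \<noteq> A" "P \<noteq> B" and bisects: "normal_bisects a b P A B"
  shows "angle_defect (P + of_real c) (A + of_real c) / cmod (A - P)
       = angle_defect (P + of_real c) (B + of_real c) / cmod (B - P)"
proof -
  let ?N = "ellipse_normal a b P"
  have proj: "Re (cnj ?N * unit_dir P X)
      = - angle_defect (P + of_real c) (X + of_real c) / (b^2 * cmod (X - P))"
    if "on_ellipse a b X" for X
    using ellipse_normal_focal[OF P that]
    unfolding unit_dir_def by (simp add: Re_divide_of_real mult.assoc[symmetric] del: of_real_diff)
  have unit: "cmod (unit_dir P X) = 1" if "P \<noteq> X" for X
    using that by (simp add: unit_dir_def norm_divide)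
  have neg: "Re (cnj ?N * unit_dir P X) < 0" if "on_ellipse a b X" "P \<noteq> X" for X
    using focal_angle_defect_pos[OF P that] that(2) b_pos unfolding proj[OF that(1)] by simp
  then have "Re (cnj ?N * unit_dir P A) + Re (cnj ?N * unit_dir P B) \<noteq> 0"
    using neg[OF A assms(4)] neg[OF B assms(5)] by linarith
  then have "Re (cnj ?N * unit_dir P A) = Re (cnj ?N * unit_dir P B)"
    using bisector_equal_projections unit assms(4,5) bisects by (simp add: normal_bisects_def)
  then have "angle_defect (P + of_real c) (A + of_real c) / (b^2 * cmod (A - P))
      = angle_defect (P + of_real c) (B + of_real c) / (b^2 * cmod (B - P))"
    unfolding proj[OF A] proj[OF B] by simp
  then show ?thesis
    using b_pos assms(4,5) by (simp add: divide_simps)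
qed

lemma three_periodic_focal_ratio:
  assumes "three_periodic a b P1 P2 P3"
  obtains r where "0 < r"
    and "angle_defect (P1 + of_real c) (P2 + of_real c) = r * cmod (P1 - P2)"
    and "angle_defect (P2 + of_real c) (P3 + of_real c) = r * cmod (P2 - P3)"
    and "angle_defect (P3 + of_real c) (P1 + of_real c) = r * cmod (P3 - P1)"
proof
  have ne: "P1 \<noteq> P2" "P2 \<noteq> P3" "P1 \<noteq> P3"
    and E: "on_ellipse a b P1" "on_ellipse a b P2" "on_ellipse a b P3"
    using assms unfolding three_periodic_def by auto
  define r where "r = angle_defect (P1 + of_real c) (P2 + of_real c) / cmod (P1 - P2)"
  show "0 < r"
    unfolding r_def using focal_angle_defect_pos[OF E(1,2) ne(1)] ne(1) by simp
  have at_P1: "angle_defect (P1 + of_real c) (P3 + of_real c) / cmod (P3 - P1) = r"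
    using normal_bisects_focal_ratio[OF E(1,2,3) ne(1,3)] assms
    unfolding r_def three_periodic_def by (simp add: norm_minus_commute)
  have at_P2: "angle_defect (P2 + of_real c) (P3 + of_real c) / cmod (P3 - P2) = r"
    using normal_bisects_focal_ratio[OF E(2,3,1) ne(2) ne(1)[symmetric]] assms
    unfolding r_def three_periodic_def by (simp add: norm_minus_commute angle_defect_commute)
  show "angle_defect (P1 + of_real c) (P2 + of_real c) = r * cmod (P1 - P2)"
    unfolding r_def using ne(1) by simp
  show "angle_defect (P2 + of_real c) (P3 + of_real c) = r * cmod (P2 - P3)"
    using at_P2 ne(2) by (simp add: field_simps norm_minus_commute)
  show "angle_defect (P3 + of_real c) (P1 + of_real c) = r * cmod (P3 - P1)"
    using at_P1 ne(3) by (simp add: field_simps angle_defect_commute)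
qed

lemma inversion_focal_limacon:
  assumes "on_ellipse a b P"
  shows "inversion (- of_real c) \<rho> P
           = of_real (- c * (1 + \<rho>^2 / b^2))
             + of_real (\<rho>^2 * a / b^2) * limacon (c / a) (sgn (P + of_real c))"
proof -
  define d z where "d = cmod (P + of_real c)" and "z = sgn (P + of_real c)"
  have "0 < d"
    using focal_radius_pos[OF assms] by (simp add: d_def)
  have Pz: "P + of_real c = of_real d * z"
    using \<open>0 < d\<close> by (simp add: d_def z_def sgn_eq)
  have "cmod z = 1"
    using norm_sgn_focal[OF assms] by (simp add: z_def)
  then have "of_real (2 * Re z) = z + inverse z" and "z \<noteq> 0"
    by (metis complex_add_cnj cnj_unit, auto)
  then have "z^2 + 1 = of_real (2 * Re z) * z"
    by (simp add: field_simps power2_eq_square)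
  then have lim: "limacon (c / a) z = of_real (c / a) + of_real (1 - c / a * Re z) * z"
    by (simp add: limacon_def field_simps)
  have "a - c * Re z = b^2 / d"
    using focal_polar[OF assms, folded d_def z_def] \<open>0 < d\<close> by (simp add: eq_divide_eq mult.commute)
  have "\<rho>^2 * a / b^2 * (1 - c / a * Re z) = \<rho>^2 / b^2 * (a - c * Re z)"
    using a_pos by (simp add: right_diff_distrib)
  also have "\<dots> = \<rho>^2 / d"
    using \<open>a - c * Re z = b^2 / d\<close> b_pos by simp
  finally have K: "\<rho>^2 * a / b^2 * (1 - c / a * Re z) = \<rho>^2 / d" .
  have "of_real (- c * (1 + \<rho>^2 / b^2)) + of_real (\<rho>^2 * a / b^2) * limacon (c / a) z
      = of_real (- c * (1 + \<rho>^2 / b^2) + \<rho>^2 * a / b^2 * (c / a))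
        + of_real (\<rho>^2 * a / b^2 * (1 - c / a * Re z)) * z"
    unfolding lim by (simp only: of_real_add of_real_mult distrib_left add.assoc mult.assoc)
  also have "\<dots> = - of_real c + of_real (\<rho>^2 / d) * z"
    unfolding K using a_pos by (simp add: field_simps)
  also have "\<dots> = inversion (- of_real c) \<rho> P"
    unfolding inversion_def diff_minus_eq_add d_def[symmetric] unfolding Pz
    using \<open>0 < d\<close> by (simp add: power2_eq_square)
  finally show ?thesis
    unfolding z_def ..
qed

lemma inversion_focal_side:
  assumes P: "on_ellipse a b P" and Q: "on_ellipse a b Q" and "0 < r"
    and ratio: "angle_defect (P + of_real c) (Q + of_real c) = r * cmod (P - Q)"
  shows "cmod (inversion (- of_real c) \<rho> P - inversion (- of_real c) \<rho> Q)
           = \<rho>^2 / (2 * r) * (cmod (sgn (P + of_real c) - sgn (Q + of_real c)))^2"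
proof -
  have dP: "0 < cmod (P + of_real c)" and dQ: "0 < cmod (Q + of_real c)"
    using focal_radius_pos P Q by auto
  then have "cmod (inversion (- of_real c) \<rho> P - inversion (- of_real c) \<rho> Q)
      = \<rho>^2 * cmod (P - Q) / (cmod (P + of_real c) * cmod (Q + of_real c))"
    by (subst norm_inversion_diff) auto
  moreover have "cmod (P - Q) = cmod (P + of_real c) * cmod (Q + of_real c)
      * (cmod (sgn (P + of_real c) - sgn (Q + of_real c)))^2 / (2 * r)"
    using ratio \<open>0 < r\<close> unfolding angle_defect_sgn by (simp add: field_simps)
  ultimately show ?thesis
    using dP dQ by (simp add: field_simps)
qed

lemma focal_limacon_chord:
  assumes P: "on_ellipse a b P" and Q: "on_ellipse a b Q" and "0 < r"
    and ratio: "angle_defect (P + of_real c) (Q + of_real c) = r * cmod (P - Q)"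
  shows "cmod (limacon (c / a) (sgn (P + of_real c)) - limacon (c / a) (sgn (Q + of_real c)))
           = b^2 / (2 * r * a) * (cmod (sgn (P + of_real c) - sgn (Q + of_real c)))^2"
proof -
  define L where "L = limacon (c / a) (sgn (P + of_real c)) - limacon (c / a) (sgn (Q + of_real c))"
  have "inversion (- of_real c) 1 P - inversion (- of_real c) 1 Q = of_real (a / b^2) * L"
    unfolding inversion_focal_limacon[OF P] inversion_focal_limacon[OF Q] L_def
    by (simp add: right_diff_distrib del: of_real_divide)
  then have "cmod (inversion (- of_real c) 1 P - inversion (- of_real c) 1 Q) = a / b^2 * cmod L"
    using a_pos b_pos by (simp add: norm_mult norm_divide norm_power)
  then have "a / b^2 * cmod L = 1 / (2 * r) * (cmod (sgn (P + of_real c) - sgn (Q + of_real c)))^2"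
    using inversion_focal_side[OF P Q \<open>0 < r\<close> ratio, of 1] by simp
  then show ?thesis
    using a_pos b_pos \<open>0 < r\<close> unfolding L_def by (simp add: field_simps)
qed

end

definition limacon_chord :: "real \<Rightarrow> real \<Rightarrow> complex \<Rightarrow> complex \<Rightarrow> complex" where
  "limacon_chord e l z w
     = (2 - of_real e * (z + w)) * (2 * z * w - of_real e * (z + w)) + of_real l * (z - w)^2"

lemma limacon_chord_commute: "limacon_chord e l z w = limacon_chord e l w z"
  unfolding limacon_chord_def by (simp add: algebra_simps power2_commute)

lemma limacon_chord_root:
  assumes z: "cmod z = 1" and w: "cmod w = 1" and "z \<noteq> w"
    and chord: "cmod (limacon e z - limacon e w) = k * (cmod (z - w))^2"
  shows "limacon_chord e (4 * k^2) z w = 0"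
proof -
  let ?s = "z + w"
  have "z \<noteq> 0" "w \<noteq> 0"
    using z w by auto
  have diff: "limacon e z - limacon e w = (z - w) * (2 - of_real e * ?s) / 2"
    by (simp add: limacon_def field_simps power2_eq_square)
  have cnj_diff:
    "cnj (limacon e z - limacon e w) = (w - z) * (2 * z * w - of_real e * ?s) / (2 * z^2 * w^2)"
    using \<open>z \<noteq> 0\<close> \<open>w \<noteq> 0\<close> by (simp add: limacon_def cnj_unit z w field_simps power2_eq_square)
  have "(limacon e z - limacon e w) * cnj (limacon e z - limacon e w)
      = of_real (k^2) * (of_real ((cmod (z - w))^2))^2"
    unfolding complex_norm_square[symmetric] chord by (simp add: power_mult_distrib)
  then have "(z - w) * (2 - of_real e * ?s) / 2
        * ((w - z) * (2 * z * w - of_real e * ?s) / (2 * z^2 * w^2))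
      = of_real (k^2) * (- ((z - w)^2) / (z * w))^2"
    unfolding cnj_diff unfolding diff norm_diff_unit_square[OF z w] .
  then have "(z - w)^2 * limacon_chord e (4 * k^2) z w = 0"
    using \<open>z \<noteq> 0\<close> \<open>w \<noteq> 0\<close> unfolding limacon_chord_def
    by (simp add: field_simps power2_eq_square) algebra
  then show ?thesis
    using \<open>z \<noteq> w\<close> by simp
qed

lemma limacon_chord_roots_sum:
  assumes "z1 \<noteq> z2" "z2 \<noteq> z3" "z1 \<noteq> z3" "e \<noteq> 0"
    and h12: "limacon_chord e l z1 z2 = 0" and h23: "limacon_chord e l z2 z3 = 0"
    and h31: "limacon_chord e l z3 z1 = 0"
  shows "z1 + z2 + z3 = of_real ((e^2 - 3 * l + 4) / (2 * e))"
proof -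
  let ?e = "of_real e :: complex" and ?l = "of_real l :: complex"
  define L where "L x y z = -2*x^2*?e - 2*x*y*?e - 2*x*z*?e + 2*x*?e^2 - 2*x*?l + 4*x
    + y*?e^2 + y*?l + z*?e^2 + z*?l - 2*?e" for x y z
  have factor: "limacon_chord e l x y - limacon_chord e l x z = (y - z) * L x y z" for x y z
    unfolding limacon_chord_def L_def by (simp add: algebra_simps power2_eq_square)
  \<comment> \<open>two relations sharing a root differ by a multiple of the difference of the other roots\<close>
  have "L z1 z2 z3 = 0"
    using factor[of z1 z2 z3] h12 h31 assms(2) by (simp add: limacon_chord_commute)
  moreover have "L z2 z1 z3 = 0"
    using factor[of z2 z1 z3] h12 h23 assms(3) by (simp add: limacon_chord_commute)
  moreover have
    "L z1 z2 z3 - L z2 z1 z3 = (z1 - z2) * (?e^2 - 3 * ?l + 4 - 2 * ?e * (z1 + z2 + z3))"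
    unfolding L_def by (simp add: algebra_simps power2_eq_square)
  ultimately have "2 * ?e * (z1 + z2 + z3) = ?e^2 - 3 * ?l + 4"
    using assms(1) by simp
  then show ?thesis
    using assms(4) by (simp add: field_simps)
qed

lemma unit_triple_real_sum:
  assumes "cmod z1 = 1" "cmod z2 = 1" "cmod z3 = 1" and "z1 + z2 + z3 \<in> \<real>"
  shows "(z1 + z2 + z3) * (z1 * z2 * z3) = z1 * z2 + z2 * z3 + z3 * z1"
proof -
  have "z1 \<noteq> 0" "z2 \<noteq> 0" "z3 \<noteq> 0"
    using assms by auto
  moreover have "inverse z1 + inverse z2 + inverse z3 = z1 + z2 + z3"
    using assms by (metis Reals_cnj_iff cnj_unit complex_cnj_add)
  ultimately show ?thesis
    by (simp add: field_simps)
qed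

lemma limacon_triangle_real_sum:
  assumes z: "cmod z1 = 1" "cmod z2 = 1" "cmod z3 = 1" and "z1 \<noteq> z2" "z2 \<noteq> z3" "z1 \<noteq> z3"
    and "e \<noteq> 0"
    and "cmod (limacon e z1 - limacon e z2) = k * (cmod (z1 - z2))^2"
    and "cmod (limacon e z2 - limacon e z3) = k * (cmod (z2 - z3))^2"
    and "cmod (limacon e z3 - limacon e z1) = k * (cmod (z3 - z1))^2"
  shows "(z1 + z2 + z3) * (z1 * z2 * z3) = z1 * z2 + z2 * z3 + z3 * z1"
proof (rule unit_triple_real_sum[OF z])
  have "z1 + z2 + z3 = of_real ((e^2 - 3 * (4 * k^2) + 4) / (2 * e))"
    using assms by (intro limacon_chord_roots_sum limacon_chord_root) auto
  then show "z1 + z2 + z3 \<in> \<real>"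
    by simp
qed

definition x100_weight :: "complex \<Rightarrow> complex \<Rightarrow> complex \<Rightarrow> complex" where
  "x100_weight z1 z2 z3 = z1 * (z2 - z3) / (z1^2 - z2 * z3)"

lemma x100_weight_mult:
  "z1^2 - z2 * z3 \<noteq> 0 \<Longrightarrow> x100_weight z1 z2 z3 * (z1^2 - z2 * z3) = z1 * (z2 - z3)"
  by (simp add: x100_weight_def)

lemma x100_weight_unit:
  assumes z: "cmod z1 = 1" "cmod z2 = 1" "cmod z3 = 1"
    and "(cmod (z3 - z1))^2 \<noteq> (cmod (z1 - z2))^2"
  shows "of_real ((cmod (z2 - z3))^2 / ((cmod (z3 - z1))^2 - (cmod (z1 - z2))^2))
           = x100_weight z1 z2 z3"
    and "z1^2 - z2 * z3 \<noteq> 0"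
proof -
  have "z1 \<noteq> 0" "z2 \<noteq> 0" "z3 \<noteq> 0"
    using z by auto
  note sq = norm_diff_unit_square[OF z(2,3)] norm_diff_unit_square[OF z(3,1)]
    norm_diff_unit_square[OF z(1,2)]
  have diff: "of_real ((cmod (z3 - z1))^2 - (cmod (z1 - z2))^2)
      = (z3 - z2) * (z1^2 - z2 * z3) / (z1 * z2 * z3)"
    unfolding of_real_diff sq using \<open>z1 \<noteq> 0\<close> \<open>z2 \<noteq> 0\<close> \<open>z3 \<noteq> 0\<close>
    by (simp add: field_simps power2_eq_square)
  moreover have "of_real ((cmod (z3 - z1))^2 - (cmod (z1 - z2))^2) \<noteq> (0 :: complex)"
    using assms(4) by (metis eq_iff_diff_eq_0 of_real_eq_0_iff)
  ultimately have "z1^2 - z2 * z3 \<noteq> 0" "z2 \<noteq> z3"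
    by auto
  then show "z1^2 - z2 * z3 \<noteq> 0"
    by blast
  have "- ((z2 - z3)^2) / (z2 * z3)
      = x100_weight z1 z2 z3 * ((z3 - z2) * (z1^2 - z2 * z3) / (z1 * z2 * z3))"
    using \<open>z1 \<noteq> 0\<close> \<open>z2 \<noteq> 0\<close> \<open>z3 \<noteq> 0\<close> \<open>z1^2 - z2 * z3 \<noteq> 0\<close>
    by (simp add: x100_weight_def field_simps power2_eq_square)
  then show "of_real ((cmod (z2 - z3))^2 / ((cmod (z3 - z1))^2 - (cmod (z1 - z2))^2))
      = x100_weight z1 z2 z3"
    unfolding of_real_divide diff sq(1)
    using \<open>z1 \<noteq> 0\<close> \<open>z2 \<noteq> 0\<close> \<open>z3 \<noteq> 0\<close> \<open>z1^2 - z2 * z3 \<noteq> 0\<close> \<open>z2 \<noteq> z3\<close>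
    by simp
qed

lemma x100_weights_sum_nonzero:
  assumes "z1 * z2 * z3 \<noteq> 0" and "z1 \<noteq> z2" "z2 \<noteq> z3" "z1 \<noteq> z3"
    and real_sum: "(z1 + z2 + z3) * (z1 * z2 * z3) = z1 * z2 + z2 * z3 + z3 * z1"
    and D: "z1^2 - z2 * z3 \<noteq> 0" "z2^2 - z3 * z1 \<noteq> 0" "z3^2 - z1 * z2 \<noteq> 0"
  shows "x100_weight z1 z2 z3 + x100_weight z2 z3 z1 + x100_weight z3 z1 z2 \<noteq> 0"
proof -
  let ?s1 = "z1 + z2 + z3" and ?s2 = "z1 * z2 + z2 * z3 + z3 * z1" and ?s3 = "z1 * z2 * z3"
  have "z1^2 - z2 * z3 = ?s1 * (z1 - ?s3) + (?s1 * ?s3 - ?s2)"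
    by (simp add: algebra_simps power2_eq_square)
  then have "?s1 \<noteq> 0"
    using real_sum D(1) by auto
  then have "?s2 \<noteq> 0"
    using real_sum assms(1) by (metis mult_eq_0_iff)
  have "(x100_weight z1 z2 z3 + x100_weight z2 z3 z1 + x100_weight z3 z1 z2)
          * ((z1^2 - z2 * z3) * (z2^2 - z3 * z1) * (z3^2 - z1 * z2))
      = (x100_weight z1 z2 z3 * (z1^2 - z2 * z3)) * (z2^2 - z3 * z1) * (z3^2 - z1 * z2)
        + (x100_weight z2 z3 z1 * (z2^2 - z3 * z1)) * (z1^2 - z2 * z3) * (z3^2 - z1 * z2)
        + (x100_weight z3 z1 z2 * (z3^2 - z1 * z2)) * (z1^2 - z2 * z3) * (z2^2 - z3 * z1)"
    by (simp add: algebra_simps)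
  also have "\<dots> = z1 * (z2 - z3) * (z2^2 - z3 * z1) * (z3^2 - z1 * z2)
        + z2 * (z3 - z1) * (z1^2 - z2 * z3) * (z3^2 - z1 * z2)
        + z3 * (z1 - z2) * (z1^2 - z2 * z3) * (z2^2 - z3 * z1)"
    unfolding x100_weight_mult[OF D(1)] x100_weight_mult[OF D(2)] x100_weight_mult[OF D(3)] ..
  also have "\<dots> = - (z1 - z2) * (z2 - z3) * (z3 - z1) * ?s1 * ?s2"
    by (simp add: algebra_simps power2_eq_square)
  finally show ?thesis
    using assms(2-4) \<open>?s1 \<noteq> 0\<close> \<open>?s2 \<noteq> 0\<close> by auto
qed

lemma x100_weights_limacon:
  assumes real_sum: "(z1 + z2 + z3) * (z1 * z2 * z3) = z1 * z2 + z2 * z3 + z3 * z1"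
    and D: "z1^2 - z2 * z3 \<noteq> 0" "z2^2 - z3 * z1 \<noteq> 0" "z3^2 - z1 * z2 \<noteq> 0"
  shows "x100_weight z1 z2 z3 * limacon e z1 + x100_weight z2 z3 z1 * limacon e z2
           + x100_weight z3 z1 z2 * limacon e z3
         = z1 * z2 * z3 * (x100_weight z1 z2 z3 + x100_weight z2 z3 z1 + x100_weight z3 z1 z2)"
proof -
  let ?s1 = "z1 + z2 + z3" and ?s2 = "z1 * z2 + z2 * z3 + z3 * z1" and ?s3 = "z1 * z2 * z3"
  define f where "f z = 2 * of_real e + 2 * z - of_real e * (z^2 + 1) - 2 * ?s3" for z
  have "(x100_weight z1 z2 z3 * f z1 + x100_weight z2 z3 z1 * f z2 + x100_weight z3 z1 z2 * f z3)
          * ((z1^2 - z2 * z3) * (z2^2 - z3 * z1) * (z3^2 - z1 * z2))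
      = (x100_weight z1 z2 z3 * (z1^2 - z2 * z3)) * (z2^2 - z3 * z1) * (z3^2 - z1 * z2) * f z1
        + (x100_weight z2 z3 z1 * (z2^2 - z3 * z1)) * (z1^2 - z2 * z3) * (z3^2 - z1 * z2) * f z2
        + (x100_weight z3 z1 z2 * (z3^2 - z1 * z2)) * (z1^2 - z2 * z3) * (z2^2 - z3 * z1) * f z3"
    by (simp add: algebra_simps)
  also have "\<dots> = z1 * (z2 - z3) * (z2^2 - z3 * z1) * (z3^2 - z1 * z2) * f z1
        + z2 * (z3 - z1) * (z1^2 - z2 * z3) * (z3^2 - z1 * z2) * f z2
        + z3 * (z1 - z2) * (z1^2 - z2 * z3) * (z2^2 - z3 * z1) * f z3"
    unfolding x100_weight_mult[OF D(1)] x100_weight_mult[OF D(2)] x100_weight_mult[OF D(3)] ..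
  also have "\<dots>
      = (?s1 * ?s3 - ?s2) * (z1 - z2) * (z2 - z3) * (z3 - z1) * (2 * ?s2 + of_real e * ?s1)"
    by (simp add: f_def algebra_simps power2_eq_square)
  also have "\<dots> = 0"
    using real_sum by simp
  finally have
    "x100_weight z1 z2 z3 * f z1 + x100_weight z2 z3 z1 * f z2 + x100_weight z3 z1 z2 * f z3 = 0"
    using D by simp
  moreover have "f z = 2 * (limacon e z - ?s3)" for z
    by (simp add: f_def limacon_def algebra_simps)
  ultimately have "2 * (x100_weight z1 z2 z3 * limacon e z1 + x100_weight z2 z3 z1 * limacon e z2
      + x100_weight z3 z1 z2 * limacon e z3
      - z1 * z2 * z3 * (x100_weight z1 z2 z3 + x100_weight z2 z3 z1 + x100_weight z3 z1 z2)) = 0"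
    by (simp add: algebra_simps)
  then show ?thesis
    by (simp only: mult_eq_0_iff right_minus_eq) simp
qed

lemma X100_limacon_triangle:
  assumes z: "cmod z1 = 1" "cmod z2 = 1" "cmod z3 = 1" and "z1 \<noteq> z2" "z2 \<noteq> z3" "z1 \<noteq> z3"
    and real_sum: "(z1 + z2 + z3) * (z1 * z2 * z3) = z1 * z2 + z2 * z3 + z3 * z1"
    and Q: "Q1 = C + of_real K * limacon e z1" "Q2 = C + of_real K * limacon e z2"
      "Q3 = C + of_real K * limacon e z3"
    and "\<kappa> \<noteq> 0"
    and sides: "cmod (Q1 - Q2) = \<kappa> * (cmod (z1 - z2))^2" "cmod (Q2 - Q3) = \<kappa> * (cmod (z2 - z3))^2"
      "cmod (Q3 - Q1) = \<kappa> * (cmod (z3 - z1))^2"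
    and scalene: "cmod (Q1 - Q2) \<noteq> cmod (Q2 - Q3)" "cmod (Q2 - Q3) \<noteq> cmod (Q3 - Q1)"
      "cmod (Q3 - Q1) \<noteq> cmod (Q1 - Q2)"
  shows "X100 Q1 Q2 Q3 = C + of_real K * (z1 * z2 * z3)"
proof -
  define w1 w2 w3 where "w1 = x100_weight z1 z2 z3" and "w2 = x100_weight z2 z3 z1"
    and "w3 = x100_weight z3 z1 z2"
  have cancel: "\<kappa> * p / (\<kappa> * q - \<kappa> * r) = p / (q - r)" for p q r
    using \<open>\<kappa> \<noteq> 0\<close> by (simp add: right_diff_distrib[symmetric])
  have distinct: "(cmod (z3 - z1))^2 \<noteq> (cmod (z1 - z2))^2" "(cmod (z1 - z2))^2 \<noteq> (cmod (z2 - z3))^2"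
    "(cmod (z2 - z3))^2 \<noteq> (cmod (z3 - z1))^2"
    using scalene unfolding sides by auto
  note W1 = x100_weight_unit[OF z(1,2,3) distinct(1)]
  note W2 = x100_weight_unit[OF z(2,3,1) distinct(2)]
  note W3 = x100_weight_unit[OF z(3,1,2) distinct(3)]
  have "X100 Q1 Q2 Q3 = (w1 * Q1 + w2 * Q2 + w3 * Q3) / (w1 + w2 + w3)"
    unfolding X100_def Let_def from_barycentrics_def of_real_add sides cancel W1(1) W2(1) W3(1)
      w1_def w2_def w3_def ..
  also have "w1 * Q1 + w2 * Q2 + w3 * Q3
      = C * (w1 + w2 + w3)
        + of_real K * (w1 * limacon e z1 + w2 * limacon e z2 + w3 * limacon e z3)"
    unfolding Q by (simp add: algebra_simps)
  also have "\<dots> = (C + of_real K * (z1 * z2 * z3)) * (w1 + w2 + w3)"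
    unfolding w1_def w2_def w3_def x100_weights_limacon[OF real_sum W1(2) W2(2) W3(2)]
    by (simp add: algebra_simps)
  finally have
    "X100 Q1 Q2 Q3 = (C + of_real K * (z1 * z2 * z3)) * (w1 + w2 + w3) / (w1 + w2 + w3)" .
  moreover have "w1 + w2 + w3 \<noteq> 0"
    unfolding w1_def w2_def w3_def using z assms(4-6)
    by (intro x100_weights_sum_nonzero[OF _ _ _ _ real_sum W1(2) W2(2) W3(2)]) auto
  ultimately show ?thesis
    by simp
qed

context ellipse_focus
begin

theorem X100_focus_inversive:
  assumes "0 < c" "0 < \<rho>" and periodic: "three_periodic a b P1 P2 P3"
  defines "Q P \<equiv> inversion (- of_real c) \<rho> P" and "z P \<equiv> sgn (P + of_real c)"
  assumes scalene: "cmod (Q P1 - Q P2) \<noteq> cmod (Q P2 - Q P3)"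
    "cmod (Q P2 - Q P3) \<noteq> cmod (Q P3 - Q P1)"
    "cmod (Q P3 - Q P1) \<noteq> cmod (Q P1 - Q P2)"
  shows "X100 (Q P1) (Q P2) (Q P3)
           = of_real (- c * (1 + \<rho>^2 / b^2)) + of_real (\<rho>^2 * a / b^2) * (z P1 * z P2 * z P3)"
proof -
  have E: "on_ellipse a b P1" "on_ellipse a b P2" "on_ellipse a b P3"
    and "P1 \<noteq> P2" "P2 \<noteq> P3" "P1 \<noteq> P3"
    using periodic unfolding three_periodic_def by auto
  then have distinct: "z P1 \<noteq> z P2" "z P2 \<noteq> z P3" "z P1 \<noteq> z P3"
    unfolding z_def by (simp_all add: sgn_focal_eq_iff)
  note unit = norm_sgn_focal[OF E(1), folded z_def] norm_sgn_focal[OF E(2), folded z_def]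
    norm_sgn_focal[OF E(3), folded z_def]
  note Q = inversion_focal_limacon[OF E(1), of \<rho>, folded Q_def z_def]
    inversion_focal_limacon[OF E(2), of \<rho>, folded Q_def z_def]
    inversion_focal_limacon[OF E(3), of \<rho>, folded Q_def z_def]
  obtain r where "0 < r"
    and ratio: "angle_defect (P1 + of_real c) (P2 + of_real c) = r * cmod (P1 - P2)"
      "angle_defect (P2 + of_real c) (P3 + of_real c) = r * cmod (P2 - P3)"
      "angle_defect (P3 + of_real c) (P1 + of_real c) = r * cmod (P3 - P1)"
    using three_periodic_focal_ratio[OF periodic] by blast
  note side = inversion_focal_side[OF E(1,2) \<open>0 < r\<close> ratio(1), of \<rho>, folded Q_def z_def]
    inversion_focal_side[OF E(2,3) \<open>0 < r\<close> ratio(2), of \<rho>, folded Q_def z_def]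
    inversion_focal_side[OF E(3,1) \<open>0 < r\<close> ratio(3), of \<rho>, folded Q_def z_def]
  have "c / a \<noteq> 0" "\<rho>^2 / (2 * r) \<noteq> 0"
    using \<open>0 < c\<close> \<open>0 < \<rho>\<close> \<open>0 < r\<close> a_pos by auto
  have "(z P1 + z P2 + z P3) * (z P1 * z P2 * z P3) = z P1 * z P2 + z P2 * z P3 + z P3 * z P1"
    using limacon_triangle_real_sum[OF unit distinct \<open>c / a \<noteq> 0\<close>]
      focal_limacon_chord[OF E(1,2) \<open>0 < r\<close> ratio(1)]
      focal_limacon_chord[OF E(2,3) \<open>0 < r\<close> ratio(2)]
      focal_limacon_chord[OF E(3,1) \<open>0 < r\<close> ratio(3)]
    unfolding z_def by blast
  then show ?thesis
    using X100_limacon_triangle[OF unit distinct _ Q \<open>\<rho>^2 / (2 * r) \<noteq> 0\<close> side scalene] by blast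
qed

end

theorem mainTheorem16:
  fixes a b \<rho> :: real and P1 P2 P3 :: complex
  assumes "a > b" and "b > 0" and "\<rho> > 0"
    and "three_periodic a b P1 P2 P3"
    and "cmod (inversion (- of_real (sqrt (a^2 - b^2))) \<rho> P1 - inversion (- of_real (sqrt (a^2 - b^2))) \<rho> P2)
         \<noteq> cmod (inversion (- of_real (sqrt (a^2 - b^2))) \<rho> P2 - inversion (- of_real (sqrt (a^2 - b^2))) \<rho> P3)"
    and "cmod (inversion (- of_real (sqrt (a^2 - b^2))) \<rho> P2 - inversion (- of_real (sqrt (a^2 - b^2))) \<rho> P3)
         \<noteq> cmod (inversion (- of_real (sqrt (a^2 - b^2))) \<rho> P3 - inversion (- of_real (sqrt (a^2 - b^2))) \<rho> P1)"
    and "cmod (inversion (- of_real (sqrt (a^2 - b^2))) \<rho> P3 - inversion (- of_real (sqrt (a^2 - b^2))) \<rho> P1)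
         \<noteq> cmod (inversion (- of_real (sqrt (a^2 - b^2))) \<rho> P1 - inversion (- of_real (sqrt (a^2 - b^2))) \<rho> P2)"
  shows "cmod (X100 (inversion (- of_real (sqrt (a^2 - b^2))) \<rho> P1)
                    (inversion (- of_real (sqrt (a^2 - b^2))) \<rho> P2)
                    (inversion (- of_real (sqrt (a^2 - b^2))) \<rho> P3)
               - Complex (- sqrt (a^2 - b^2) * (1 + \<rho>^2 / b^2)) 0)
         = \<rho>^2 * a / b^2"
proof -
  let ?c = "sqrt (a^2 - b^2)"
  have "b^2 < a^2"
    using assms(1,2) by (simp add: power_strict_mono)
  then interpret ellipse_focus a b ?c
    using assms(1,2) by unfold_locales auto
  have "0 < ?c"
    using \<open>b^2 < a^2\<close> by simp
  have "on_ellipse a b P1" "on_ellipse a b P2" "on_ellipse a b P3"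
    using assms(4) by (simp_all add: three_periodic_def)
  then show ?thesis
    unfolding complex_of_real_def[symmetric] X100_focus_inversive[OF \<open>0 < ?c\<close> assms(3-7)]
    using assms(2,3) a_pos
    by (simp add: norm_mult norm_sgn_focal del: of_real_mult of_real_divide of_real_power)
qed

end
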